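(* Let $H(s)=K\,\frac{\prod_{i=1}^{m}(s-z_i)}{\prod_{i=1}^{n}(s-p_i)}$ be a rational function with real coefficients, where $K\neq 0$ is real, $z\in\mathbb{C}^m$ are its zeros and $p\in\mathbb{C}^n$ its poles. If $H$ is logarithmically completely monotonic, then: (a) $n\geq m$; (b) $\max_i \operatorname{Re}(p_i)\geq \max_i \operatorname{Re}(z_i)$; (c) if $n=m$, then $\sum_{i=1}^n p_i\geq \sum_{i=1}^m z_i$.
   Context: Let $\sigma(H)=\max_i \operatorname{Re}(p_i)$. A function $H$ is logarithmically completely monotonic (LCM) on $I\subseteq\mathbb{R}$ if $H(s)>0$ and $(-1)^k[\log H(s)]^{(k)}\geq 0$ for all $k\in\{1,2,\dots\}$ and all $s\in I$. "$H$ is LCM" means LCM on $I=(\sigma(H),+\infty)$. *)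

theory Defs
  imports "HOL-Analysis.Analysis" "HOL-Computational_Algebra.Polynomial"
begin

definition ratfun :: "real \<Rightarrow> complex list \<Rightarrow> complex list \<Rightarrow> complex \<Rightarrow> complex" where
  "ratfun K z p s = complex_of_real K * (\<Prod>i<length z. s - z ! i) / (\<Prod>i<length p. s - p ! i)"

definition root_poly :: "complex list \<Rightarrow> complex poly" where
  "root_poly r = (\<Prod>i<length r. [:- (r ! i), 1:])"

definition real_poly :: "complex poly \<Rightarrow> bool" where
  "real_poly q \<longleftrightarrow> (\<forall>k. coeff q k \<in> \<real>)"

definition max_re :: "complex list \<Rightarrow> ereal" where
  "max_re r = (if r = [] then -\<infinity> else Max ((\<lambda>c. ereal (Re c)) ` set r))"

definition LCM_on :: "(real \<Rightarrow> real) \<Rightarrow> real set \<Rightarrow> bool" where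
  "LCM_on H I \<longleftrightarrow> (\<forall>s\<in>I. H s > 0) \<and>
     (\<forall>k::nat. k \<ge> 1 \<longrightarrow> (\<forall>s\<in>I. (-1) ^ k * (deriv ^^ k) (\<lambda>t. ln (H t)) s \<ge> 0))"

end

(*
  On the half-line t > max Re p we have log H(t) = log |K| + sum_i log |t - z_i| - sum_i log |t - p_i|,
  so the k-th derivative of log H is (-1)^(k-1) (k-1)! times
  Re (sum_i (t - z_i)^-k - sum_i (t - p_i)^-k).  Thus the LCM property says that
  Re sum_i (t - z_i)^-k <= Re sum_i (t - p_i)^-k for all k >= 1 and all t on the half-line.

  The case k = 1 already gives (a) and (c): since t / (t - w) = 1 + O(1/t) and
  t^2 / (t - w) - t = w + O(1/t), multiplying by t, resp. by t^2 and subtracting n t, and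
  letting t tend to infinity compares m with n, resp. the sums of the zeros and of the poles.

  For (b), let c = a + ib be a zero of maximal real part a and, among those, of least |b|.
  If a > max Re p then b <> 0, because H > 0 on the half-line.  For large N the point
  t = a + |b| cot(pi/N) lies on the half-line, and the roots nearest to it are exactly the
  zeros a +- ib, at a distance d with (t - a -+ ib)^(2N) = d^(2N).  Multiplying the
  inequality for k = 2Nm by d^k and letting m tend to infinity, the left side tends to the
  number of these zeros and the right side to 0, a contradiction.
*)
theory Submission
  imports Defs "HOL-Real_Asymp.Real_Asymp"
begin

section \<open>The logarithmic derivatives of a rational function\<close>

definition inverse_power_sum :: "complex list \<Rightarrow> nat \<Rightarrow> real \<Rightarrow> real" where
  "inverse_power_sum r k t = (\<Sum>i<length r. Re (inverse ((complex_of_real t - r ! i) ^ k)))"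

lemma has_field_derivative_inverse_power:
  assumes "(f has_field_derivative f') (at x within S)" "f x \<noteq> 0"
  shows "((\<lambda>x. inverse (f x ^ k)) has_field_derivative
           - of_nat k * f' * inverse (f x ^ Suc k)) (at x within S)"
proof -
  have "- int k - 1 = - int (Suc k)" by simp
  with DERIV_power_int[OF assms(1), where n = "- int k"] assms(2) show ?thesis
    by (simp add: power_int_minus mult_ac del: of_nat_Suc)
qed

lemma has_real_derivative_Re_inverse_power:
  assumes "complex_of_real t \<noteq> w"
  shows "((\<lambda>t. Re (inverse ((complex_of_real t - w) ^ k))) has_real_derivative
           - real k * Re (inverse ((complex_of_real t - w) ^ Suc k))) (at t)"
proof -
  have "((\<lambda>x. inverse ((x - w) ^ k)) has_field_derivative
          - of_nat k * 1 * inverse ((complex_of_real t - w) ^ Suc k)) (at (complex_of_real t))"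
    using assms by (intro has_field_derivative_inverse_power derivative_eq_intros) auto
  from has_field_derivative_Re[OF has_vector_derivative_real_field[OF this]] show ?thesis
    by simp
qed

lemma has_real_derivative_ln_norm:
  assumes "complex_of_real t \<noteq> w"
  shows "((\<lambda>t. ln (cmod (complex_of_real t - w))) has_real_derivative
           Re (inverse (complex_of_real t - w))) (at t)"
proof -
  define Q where "Q s = (s - Re w)\<^sup>2 + (Im w)\<^sup>2" for s
  have "Q t > 0"
    using assms by (auto simp: Q_def complex_eq_iff sum_power2_gt_zero_iff)
  have "(\<lambda>t. ln (cmod (complex_of_real t - w))) = (\<lambda>s. ln (Q s) / 2)"
    by (auto simp: Q_def cmod_def ln_sqrt sum_power2_ge_zero)
  moreover have "(Q has_real_derivative 2 * (t - Re w)) (at t)"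
    unfolding Q_def[abs_def] by (auto intro!: derivative_eq_intros)
  then have "((\<lambda>s. ln (Q s) / 2) has_real_derivative (t - Re w) / Q t) (at t)"
    using \<open>Q t > 0\<close> by (auto intro!: derivative_eq_intros simp: field_simps)
  moreover have "Re (inverse (complex_of_real t - w)) = (t - Re w) / Q t"
    by (simp add: Q_def power2_eq_square)
  ultimately show ?thesis by (simp only:)
qed

lemma has_real_derivative_inverse_power_sum:
  assumes "complex_of_real t \<notin> set r"
  shows "(inverse_power_sum r k has_real_derivative - real k * inverse_power_sum r (Suc k) t) (at t)"
  unfolding inverse_power_sum_def[abs_def] sum_distrib_left
  using assms by (intro DERIV_sum has_real_derivative_Re_inverse_power) (auto simp: in_set_conv_nth)

lemma has_real_derivative_sum_ln_norm:
  assumes "complex_of_real t \<notin> set r"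
  shows "((\<lambda>t. \<Sum>i<length r. ln (cmod (complex_of_real t - r ! i)))
           has_real_derivative inverse_power_sum r 1 t) (at t)"
  unfolding inverse_power_sum_def power_one_right
  using assms by (intro DERIV_sum has_real_derivative_ln_norm) (auto simp: in_set_conv_nth)

(* Poles are excluded too: there the denominator vanishes and x / 0 = 0. *)
lemma ratfun_Re_posD:
  assumes "Re (ratfun K z p x) > 0"
  shows "K \<noteq> 0" "x \<notin> set z" "x \<notin> set p"
proof -
  have "ratfun K z p x \<noteq> 0"
    using assms by auto
  then show "K \<noteq> 0" "x \<notin> set z" "x \<notin> set p"
    by (auto simp: ratfun_def in_set_conv_nth prod_zero_iff)
qed

lemma ratfun_of_real_in_Reals:
  assumes "real_poly (root_poly z)" "real_poly (root_poly p)"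
  shows "ratfun K z p (complex_of_real t) \<in> \<real>"
proof -
  have poly_Reals: "poly q (complex_of_real t) \<in> \<real>" if "real_poly q" for q
    using that unfolding poly_altdef real_poly_def by (intro sum_in_Reals Reals_mult Reals_power) auto
  have "ratfun K z p (complex_of_real t) =
          complex_of_real K * poly (root_poly z) (complex_of_real t) / poly (root_poly p) (complex_of_real t)"
    by (simp add: ratfun_def root_poly_def poly_prod)
  with poly_Reals[OF assms(1)] poly_Reals[OF assms(2)] show ?thesis
    by auto
qed

lemma ln_ratfun_of_real:
  assumes "ratfun K z p (complex_of_real t) \<in> \<real>" "Re (ratfun K z p (complex_of_real t)) > 0"
  shows "ln (Re (ratfun K z p (complex_of_real t))) = ln \<bar>K\<bar>
           + (\<Sum>i<length z. ln (cmod (complex_of_real t - z ! i)))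
           - (\<Sum>i<length p. ln (cmod (complex_of_real t - p ! i)))"
proof -
  let ?H = "ratfun K z p (complex_of_real t)"
  define P where "P r = (\<Prod>i<length r. cmod (complex_of_real t - r ! i))" for r
  note nonzero = ratfun_Re_posD[OF assms(2)]
  have P_pos: "P r > 0" and ln_P: "ln (P r) = (\<Sum>i<length r. ln (cmod (complex_of_real t - r ! i)))"
    if "complex_of_real t \<notin> set r" for r
    using that unfolding P_def by (auto intro!: prod_pos ln_prod simp: in_set_conv_nth)
  have "Re ?H = cmod ?H"
    using assms by (metis Re_complex_of_real Reals_cases abs_of_pos norm_of_real)
  also have "\<dots> = \<bar>K\<bar> * P z / P p"
    by (simp add: P_def ratfun_def norm_mult norm_divide prod_norm)
  finally show ?thesis
    using nonzero P_pos[OF nonzero(2)] P_pos[OF nonzero(3)] ln_P[OF nonzero(2)] ln_P[OF nonzero(3)]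
    by (simp add: ln_div ln_mult)
qed

lemma deriv_ln_ratfun:
  assumes "real_poly (root_poly z)" "real_poly (root_poly p)" "open U"
    and pos: "\<And>s. s \<in> U \<Longrightarrow> Re (ratfun K z p (complex_of_real s)) > 0"
    and "t \<in> U"
  shows "deriv (\<lambda>s. ln (Re (ratfun K z p (complex_of_real s)))) t =
           inverse_power_sum z 1 t - inverse_power_sum p 1 t"
proof -
  have "eventually (\<lambda>s. s \<in> U) (nhds t)"
    using \<open>open U\<close> \<open>t \<in> U\<close> by (rule eventually_nhds_in_open)
  then have "eventually (\<lambda>s. ln (Re (ratfun K z p (complex_of_real s))) = ln \<bar>K\<bar>
               + (\<Sum>i<length z. ln (cmod (complex_of_real s - z ! i)))
               - (\<Sum>i<length p. ln (cmod (complex_of_real s - p ! i)))) (nhds t)"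
    by eventually_elim (use assms(1,2) pos in \<open>auto intro: ln_ratfun_of_real ratfun_of_real_in_Reals\<close>)
  then have "deriv (\<lambda>s. ln (Re (ratfun K z p (complex_of_real s)))) t =
               deriv (\<lambda>s. ln \<bar>K\<bar> + (\<Sum>i<length z. ln (cmod (complex_of_real s - z ! i)))
                        - (\<Sum>i<length p. ln (cmod (complex_of_real s - p ! i)))) t"
    by (rule deriv_cong_ev) simp
  also have "\<dots> = 0 + inverse_power_sum z 1 t - inverse_power_sum p 1 t"
    using ratfun_Re_posD(2,3)[OF pos[OF \<open>t \<in> U\<close>]]
    by (intro DERIV_imp_deriv DERIV_diff DERIV_add DERIV_const has_real_derivative_sum_ln_norm) auto
  finally show ?thesis by simp
qed

lemma higher_deriv_ln_ratfun:
  assumes "real_poly (root_poly z)" "real_poly (root_poly p)" "open U"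
    and pos: "\<And>s. s \<in> U \<Longrightarrow> Re (ratfun K z p (complex_of_real s)) > 0"
    and "t \<in> U"
  shows "(deriv ^^ Suc j) (\<lambda>s. ln (Re (ratfun K z p (complex_of_real s)))) t =
           (-1) ^ j * fact j * (inverse_power_sum z (Suc j) t - inverse_power_sum p (Suc j) t)"
  using \<open>t \<in> U\<close>
proof (induction j arbitrary: t)
  case 0
  then show ?case
    using deriv_ln_ratfun[OF assms(1-4)] by simp
next
  case (Suc j)
  have "eventually (\<lambda>s. s \<in> U) (nhds t)"
    using \<open>open U\<close> Suc.prems by (rule eventually_nhds_in_open)
  then have "deriv ((deriv ^^ Suc j) (\<lambda>s. ln (Re (ratfun K z p (complex_of_real s))))) t =
      deriv (\<lambda>s. (-1) ^ j * fact j * (inverse_power_sum z (Suc j) s - inverse_power_sum p (Suc j) s)) t"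
    by (intro deriv_cong_ev) (use Suc.IH in \<open>auto elim!: eventually_mono\<close>)
  also have "\<dots> = (-1) ^ j * fact j * (- real (Suc j) * inverse_power_sum z (Suc (Suc j)) t
                                     - - real (Suc j) * inverse_power_sum p (Suc (Suc j)) t)"
    using ratfun_Re_posD(2,3)[OF pos[OF Suc.prems]]
    by (intro DERIV_imp_deriv DERIV_cmult DERIV_diff has_real_derivative_inverse_power_sum) auto
  also have "\<dots> = (-1) ^ Suc j * fact (Suc j) *
                      (inverse_power_sum z (Suc (Suc j)) t - inverse_power_sum p (Suc (Suc j)) t)"
    by (simp add: algebra_simps)
  finally show ?case by simp
qed

lemma LCM_on_ratfun_imp_inverse_power_sum_le:
  assumes "real_poly (root_poly z)" "real_poly (root_poly p)" "open U"
    and lcm: "LCM_on (\<lambda>s. Re (ratfun K z p (complex_of_real s))) U"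
    and "t \<in> U" "1 \<le> k"
  shows "inverse_power_sum z k t \<le> inverse_power_sum p k t"
proof -
  obtain j where k: "k = Suc j" using \<open>1 \<le> k\<close> by (cases k) auto
  have pos: "\<And>s. s \<in> U \<Longrightarrow> Re (ratfun K z p (complex_of_real s)) > 0"
    using lcm by (simp add: LCM_on_def)
  have "0 \<le> (-1) ^ k * (deriv ^^ k) (\<lambda>s. ln (Re (ratfun K z p (complex_of_real s)))) t"
    using lcm \<open>t \<in> U\<close> \<open>1 \<le> k\<close> by (simp add: LCM_on_def)
  also have "\<dots> = (-1) ^ Suc j * ((-1) ^ j * fact j * (inverse_power_sum z k t - inverse_power_sum p k t))"
    unfolding k by (subst higher_deriv_ln_ratfun[OF assms(1-3) pos \<open>t \<in> U\<close>]) simp_all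
  also have "\<dots> = - fact j * (inverse_power_sum z k t - inverse_power_sum p k t)"
    by (simp flip: power_add)
  finally show ?thesis
    using fact_gt_zero[of j, where 'a = real] by (simp add: mult_le_0_iff)
qed

section \<open>Behaviour at infinity\<close>

lemma tendsto_inverse_of_real_minus_at_top:
  "((\<lambda>t. inverse (complex_of_real t - w)) \<longlongrightarrow> 0) at_top"
proof -
  have "filterlim (\<lambda>t. complex_of_real t + - w) at_infinity at_top"
    by (rule tendsto_add_filterlim_at_infinity'[OF filterlim_of_real_at_infinity tendsto_const])
  then show ?thesis
    by (simp add: filterlim_compose[OF tendsto_inverse_0])
qed

lemma eventually_of_real_notin_at_top:
  assumes "finite A"
  shows "eventually (\<lambda>t. complex_of_real t \<notin> A) at_top"
proof -
  have "eventually (\<lambda>t. \<forall>w\<in>A. Re w < t) at_top"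
    using assms by (intro eventually_ball_finite ballI eventually_gt_at_top)
  then show ?thesis
    by eventually_elim auto
qed

lemma mult_Re_inverse_of_real_minus:
  assumes "complex_of_real t \<noteq> w"
  shows "t * Re (inverse (complex_of_real t - w)) = 1 + Re (w * inverse (complex_of_real t - w))"
proof -
  have "complex_of_real t * inverse (complex_of_real t - w) = 1 + w * inverse (complex_of_real t - w)"
    using assms by (simp add: field_simps)
  from arg_cong[where f = Re, OF this] show ?thesis
    by (simp del: inverse_complex.sel)
qed

lemma sq_mult_Re_inverse_of_real_minus:
  assumes "complex_of_real t \<noteq> w"
  shows "t\<^sup>2 * Re (inverse (complex_of_real t - w)) - t = Re (w + w\<^sup>2 * inverse (complex_of_real t - w))"
proof -
  have "complex_of_real (t\<^sup>2) * inverse (complex_of_real t - w) - complex_of_real t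
          = w + w\<^sup>2 * inverse (complex_of_real t - w)"
    using assms by (simp add: field_simps power2_eq_square)
  from arg_cong[where f = Re, OF this] show ?thesis
    by (simp del: inverse_complex.sel)
qed

lemma tendsto_mult_inverse_power_sum_at_top:
  "((\<lambda>t. t * inverse_power_sum r 1 t) \<longlongrightarrow> real (length r)) at_top"
proof -
  have "((\<lambda>t. \<Sum>i<length r. 1 + Re (r ! i * inverse (complex_of_real t - r ! i)))
          \<longlongrightarrow> (\<Sum>i<length r. 1 + Re (r ! i * 0))) at_top"
    by (intro tendsto_intros tendsto_inverse_of_real_minus_at_top)
  moreover have "eventually (\<lambda>t. (\<Sum>i<length r. 1 + Re (r ! i * inverse (complex_of_real t - r ! i)))
                   = t * inverse_power_sum r 1 t) at_top"
    using eventually_of_real_notin_at_top[OF finite_set[of r]]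
  proof eventually_elim
    case (elim t)
    then have "t * Re (inverse (complex_of_real t - w)) = 1 + Re (w * inverse (complex_of_real t - w))"
      if "w \<in> set r" for w
      using that by (intro mult_Re_inverse_of_real_minus) auto
    then show ?case
      by (simp add: inverse_power_sum_def sum_distrib_left del: inverse_complex.sel)
  qed
  ultimately show ?thesis
    by (auto intro: Lim_transform_eventually)
qed

lemma tendsto_sq_mult_inverse_power_sum_at_top:
  "((\<lambda>t. t\<^sup>2 * inverse_power_sum r 1 t - real (length r) * t) \<longlongrightarrow> Re (sum_list r)) at_top"
proof -
  have "((\<lambda>t. \<Sum>i<length r. Re (r ! i + (r ! i)\<^sup>2 * inverse (complex_of_real t - r ! i)))
          \<longlongrightarrow> (\<Sum>i<length r. Re (r ! i + (r ! i)\<^sup>2 * 0))) at_top"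
    by (intro tendsto_intros tendsto_inverse_of_real_minus_at_top)
  moreover have "eventually (\<lambda>t. (\<Sum>i<length r. Re (r ! i + (r ! i)\<^sup>2 * inverse (complex_of_real t - r ! i)))
                   = t\<^sup>2 * inverse_power_sum r 1 t - real (length r) * t) at_top"
    using eventually_of_real_notin_at_top[OF finite_set[of r]]
  proof eventually_elim
    case (elim t)
    then have "t\<^sup>2 * Re (inverse (complex_of_real t - w)) - t = Re (w + w\<^sup>2 * inverse (complex_of_real t - w))"
      if "w \<in> set r" for w
      using that by (intro sq_mult_Re_inverse_of_real_minus) auto
    then have "(\<Sum>i<length r. Re (r ! i + (r ! i)\<^sup>2 * inverse (complex_of_real t - r ! i)))
                 = (\<Sum>i<length r. t\<^sup>2 * Re (inverse (complex_of_real t - r ! i)) - t)"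
      by (intro sum.cong refl) (metis lessThan_iff nth_mem)
    then show ?case
      by (simp add: inverse_power_sum_def sum_distrib_left sum_subtractf del: inverse_complex.sel)
  qed
  ultimately show ?thesis
    by (auto intro: Lim_transform_eventually simp: sum_list_sum_nth atLeast0LessThan Re_sum)
qed

lemma length_le_if_inverse_power_sum_le_at_top:
  assumes "eventually (\<lambda>t. inverse_power_sum z 1 t \<le> inverse_power_sum p 1 t) at_top"
  shows "length z \<le> length p"
proof -
  have "eventually (\<lambda>t. t * inverse_power_sum z 1 t \<le> t * inverse_power_sum p 1 t) at_top"
    using assms eventually_gt_at_top[of 0] by eventually_elim (simp add: mult_left_mono)
  with tendsto_mult_inverse_power_sum_at_top[of z] tendsto_mult_inverse_power_sum_at_top[of p]
  have "real (length z) \<le> real (length p)"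
    by (intro tendsto_le[OF trivial_limit_at_top_linorder])
  then show ?thesis by simp
qed

lemma Re_sum_list_le_if_inverse_power_sum_le_at_top:
  assumes "eventually (\<lambda>t. inverse_power_sum z 1 t \<le> inverse_power_sum p 1 t) at_top"
    and "length z = length p"
  shows "Re (sum_list z) \<le> Re (sum_list p)"
proof -
  have "eventually (\<lambda>t. t\<^sup>2 * inverse_power_sum z 1 t - real (length z) * t
                        \<le> t\<^sup>2 * inverse_power_sum p 1 t - real (length p) * t) at_top"
    using assms(1) by eventually_elim (simp add: assms(2) mult_left_mono)
  with tendsto_sq_mult_inverse_power_sum_at_top[of z] tendsto_sq_mult_inverse_power_sum_at_top[of p]
  show ?thesis
    by (intro tendsto_le[OF trivial_limit_at_top_linorder])
qed

section \<open>Zeros to the right of all poles\<close>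

lemma tendsto_sum_Re_power:
  assumes "finite A" "\<And>i. i \<in> A \<Longrightarrow> u i = 1 \<or> cmod (u i) < 1"
  shows "(\<lambda>m. \<Sum>i\<in>A. Re (u i ^ m)) \<longlonglongrightarrow> real (card {i\<in>A. u i = 1})"
proof -
  have "(\<lambda>m. Re (u i ^ m)) \<longlonglongrightarrow> (if u i = 1 then 1 else 0)" if "i \<in> A" for i
  proof (cases "u i = 1")
    case False
    with assms(2)[OF that] have "(\<lambda>m. u i ^ m) \<longlonglongrightarrow> 0"
      by (auto intro: LIMSEQ_power_zero)
    with False show ?thesis
      using tendsto_Re by fastforce
  qed simp
  then have "(\<lambda>m. \<Sum>i\<in>A. Re (u i ^ m)) \<longlonglongrightarrow> (\<Sum>i\<in>A. if u i = 1 then 1 else 0)"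
    by (rule tendsto_sum)
  then show ?thesis
    using assms(1) by (simp add: sum.If_cases Collect_conj_eq)
qed

lemma card_le_if_Re_power_sums_le:
  assumes "finite A" "\<And>i. i \<in> A \<Longrightarrow> u i = 1 \<or> cmod (u i) < 1"
    and "finite B" "\<And>j. j \<in> B \<Longrightarrow> v j = 1 \<or> cmod (v j) < 1"
    and "eventually (\<lambda>m. (\<Sum>i\<in>A. Re (u i ^ m)) \<le> (\<Sum>j\<in>B. Re (v j ^ m))) sequentially"
  shows "card {i\<in>A. u i = 1} \<le> card {j\<in>B. v j = 1}"
  using tendsto_le[OF trivial_limit_sequentially tendsto_sum_Re_power[OF assms(3,4)]
      tendsto_sum_Re_power[OF assms(1,2)] assms(5)]
  by simp

(* After scaling by d, each root in D contributes 1 to every n-th power sum,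
   while the contributions of all other roots decay geometrically. *)
lemma card_dominant_roots_le:
  assumes le: "\<And>k. 1 \<le> k \<Longrightarrow> inverse_power_sum z k t \<le> inverse_power_sum p k t"
    and "0 < d" "1 \<le> n"
    and on_circle: "\<And>w. w \<in> D \<Longrightarrow> (complex_of_real t - w) ^ n = complex_of_real (d ^ n)"
    and outside: "\<And>w. w \<in> set z \<union> set p \<Longrightarrow> w \<notin> D \<Longrightarrow> d < cmod (complex_of_real t - w)"
  shows "card {i. i < length z \<and> z ! i \<in> D} \<le> card {i. i < length p \<and> p ! i \<in> D}"
proof -
  define u where "u w = (complex_of_real d * inverse (complex_of_real t - w)) ^ n" for w
  have u_eq_1: "u w = 1 \<longleftrightarrow> w \<in> D" and u_cases: "u w = 1 \<or> cmod (u w) < 1"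
    if "w \<in> set z \<union> set p" for w
  proof -
    have "cmod (u w) < 1" if "w \<notin> D"
    proof -
      have "d / cmod (complex_of_real t - w) < 1"
        using outside[OF \<open>w \<in> set z \<union> set p\<close> that] \<open>0 < d\<close> by (simp add: divide_less_eq)
      then show ?thesis
        using \<open>0 < d\<close> \<open>1 \<le> n\<close>
        by (simp add: u_def norm_power norm_mult norm_inverse divide_inverse power_less_one_iff)
    qed
    moreover have "u w = 1" if "w \<in> D"
      using on_circle[OF that] \<open>0 < d\<close> by (simp add: u_def power_mult_distrib power_inverse)
    ultimately show "u w = 1 \<longleftrightarrow> w \<in> D" "u w = 1 \<or> cmod (u w) < 1"
      by force+
  qed
  have "Re (u w ^ m) = d ^ (n * m) * Re (inverse ((complex_of_real t - w) ^ (n * m)))" for w m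
    by (simp add: u_def power_mult_distrib power_mult power_inverse flip: of_real_power)
  then have "(\<Sum>i<length z. Re (u (z ! i) ^ m)) \<le> (\<Sum>i<length p. Re (u (p ! i) ^ m))" if "1 \<le> m" for m
    using le[of "n * m"] \<open>0 < d\<close> \<open>1 \<le> n\<close> that
    by (simp add: inverse_power_sum_def sum_distrib_left[symmetric] del: inverse_complex.sel)
  then have "card {i\<in>{..<length z}. u (z ! i) = 1} \<le> card {i\<in>{..<length p}. u (p ! i) = 1}"
    using u_cases by (intro card_le_if_Re_power_sums_le eventually_sequentiallyI[of 1]) auto
  moreover have "{i\<in>{..<length r}. u (r ! i) = 1} = {i. i < length r \<and> r ! i \<in> D}"
    if "set r \<subseteq> set z \<union> set p" for r
    using that u_eq_1 by (auto dest: nth_mem)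
  ultimately show ?thesis
    by simp
qed

lemma eventually_norm_of_real_minus_less_at_top:
  assumes "Re w < Re c \<or> (Re w = Re c \<and> \<bar>Im c\<bar> < \<bar>Im w\<bar>)"
  shows "eventually (\<lambda>t. cmod (complex_of_real t - c) < cmod (complex_of_real t - w)) at_top"
proof -
  have "eventually (\<lambda>t. (t - Re c)\<^sup>2 + (Im c)\<^sup>2 < (t - Re w)\<^sup>2 + (Im w)\<^sup>2) at_top"
    using assms
  proof
    assume "Re w < Re c"
    then show ?thesis by real_asymp
  next
    assume "Re w = Re c \<and> \<bar>Im c\<bar> < \<bar>Im w\<bar>"
    then have "(Im c)\<^sup>2 < (Im w)\<^sup>2"
      using abs_le_square_iff[of "Im w" "Im c"] by auto
    with \<open>Re w = Re c \<and> \<bar>Im c\<bar> < \<bar>Im w\<bar>\<close> show ?thesis by simp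
  qed
  then show ?thesis
    by eventually_elim (simp add: cmod_def)
qed

lemma sin_pi_divide_gt_zero:
  assumes "2 \<le> N"
  shows "sin (pi / real N) > 0"
  using assms by (intro sin_gt_zero) (auto simp: divide_less_eq)

lemma of_real_cot_minus_eq_cis:
  assumes "sin x > 0" "Re w = a" "\<bar>Im w\<bar> = b"
  shows "complex_of_real (a + b * cot x) - w =
           complex_of_real (b / sin x) * cis (if Im w \<ge> 0 then - x else x)"
  using assms by (auto simp: complex_eq_iff cot_def)

lemma norm_of_real_cot_minus:
  assumes "sin x > 0" "Re w = a" "\<bar>Im w\<bar> = b"
  shows "cmod (complex_of_real (a + b * cot x) - w) = b / sin x"
  unfolding of_real_cot_minus_eq_cis[OF assms] using assms by (auto simp: norm_mult norm_divide)

lemma of_real_cot_minus_power_eq: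
  assumes "2 \<le> N" "Re w = a" "\<bar>Im w\<bar> = b"
  shows "(complex_of_real (a + b * cot (pi / N)) - w) ^ (2 * N) =
           complex_of_real ((b / sin (pi / N)) ^ (2 * N))"
proof -
  define \<theta> where "\<theta> = (if Im w \<ge> 0 then - (pi / N) else pi / N)"
  have "real (2 * N) * \<theta> = 2 * pi * (if Im w \<ge> 0 then -1 else 1)"
    using assms(1) by (simp add: \<theta>_def)
  then have "cis \<theta> ^ (2 * N) = cis (2 * pi * (if Im w \<ge> 0 then -1 else 1))"
    by (simp only: Complex.DeMoivre)
  then have "cis \<theta> ^ (2 * N) = 1"
    by simp
  moreover have "complex_of_real (a + b * cot (pi / N)) - w = complex_of_real (b / sin (pi / N)) * cis \<theta>"
    unfolding \<theta>_def using sin_pi_divide_gt_zero[OF assms(1)] assms(2,3) by (rule of_real_cot_minus_eq_cis)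
  ultimately have "(complex_of_real (a + b * cot (pi / N)) - w) ^ (2 * N) =
                     complex_of_real (b / sin (pi / N)) ^ (2 * N) * 1"
    by (simp only: power_mult_distrib)
  then show ?thesis
    by simp
qed

(* b / sin(pi/N) is the distance from t = a + b cot(pi/N) to a +- ib, which are seen from t
   at the angles -+pi/N. *)
lemma obtain_cot_point_closer:
  assumes "0 < b" "finite F"
    and "\<And>w. w \<in> F \<Longrightarrow> Re w < a \<or> (Re w = a \<and> b < \<bar>Im w\<bar>)"
    and "eventually P at_top"
  obtains N :: nat where "2 \<le> N" "P (a + b * cot (pi / N))"
    "\<And>w. w \<in> F \<Longrightarrow> b / sin (pi / N) < cmod (complex_of_real (a + b * cot (pi / N)) - w)"
proof -
  define c where "c = Complex a b"
  have "eventually (\<lambda>t. P t \<and> (\<forall>w\<in>F. cmod (complex_of_real t - c) < cmod (complex_of_real t - w))) at_top"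
    using assms by (intro eventually_conj eventually_ball_finite ballI
        eventually_norm_of_real_minus_less_at_top) (auto simp: c_def)
  moreover have "filterlim (\<lambda>N. a + b * cot (pi / real N)) at_top sequentially"
    using \<open>0 < b\<close> unfolding cot_def by real_asymp
  ultimately have "eventually (\<lambda>N. P (a + b * cot (pi / real N)) \<and>
      (\<forall>w\<in>F. cmod (complex_of_real (a + b * cot (pi / real N)) - c)
               < cmod (complex_of_real (a + b * cot (pi / real N)) - w))) sequentially"
    by (rule eventually_compose_filterlim)
  from eventually_happens'[OF sequentially_bot eventually_conj[OF eventually_ge_at_top[of 2] this]]
  obtain N where "2 \<le> N" "P (a + b * cot (pi / real N))"
    and closer: "\<forall>w\<in>F. cmod (complex_of_real (a + b * cot (pi / real N)) - c)
                         < cmod (complex_of_real (a + b * cot (pi / real N)) - w)"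
    by blast
  moreover have "cmod (complex_of_real (a + b * cot (pi / real N)) - c) = b / sin (pi / N)"
    using sin_pi_divide_gt_zero[OF \<open>2 \<le> N\<close>] \<open>0 < b\<close> by (intro norm_of_real_cot_minus) (auto simp: c_def)
  ultimately show thesis
    using that[of N] by auto
qed

lemma card_roots_on_conjugate_pair_le:
  assumes le: "\<And>t k. P t \<Longrightarrow> 1 \<le> k \<Longrightarrow> inverse_power_sum z k t \<le> inverse_power_sum p k t"
    and "eventually P at_top" "0 < b"
    and left: "\<And>w. w \<in> set z \<union> set p \<Longrightarrow> Re w < a \<or> (Re w = a \<and> b \<le> \<bar>Im w\<bar>)"
  defines "D \<equiv> {w. Re w = a \<and> \<bar>Im w\<bar> = b}"
  shows "card {i. i < length z \<and> z ! i \<in> D} \<le> card {i. i < length p \<and> p ! i \<in> D}"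
proof -
  have "Re w < a \<or> (Re w = a \<and> b < \<bar>Im w\<bar>)" if "w \<in> set z \<union> set p - D" for w
    using that left by (force simp: D_def)
  then obtain N :: nat where "2 \<le> N" and "P (a + b * cot (pi / N))"
    and outside: "\<And>w. w \<in> set z \<union> set p - D \<Longrightarrow>
                    b / sin (pi / N) < cmod (complex_of_real (a + b * cot (pi / N)) - w)"
    using obtain_cot_point_closer[OF \<open>0 < b\<close>, of "set z \<union> set p - D" a P] \<open>eventually P at_top\<close>
    by blast
  define t where "t = a + b * cot (pi / N)"
  show ?thesis
  proof (rule card_dominant_roots_le[where t = t and d = "b / sin (pi / N)" and n = "2 * N"])
    show "inverse_power_sum z k t \<le> inverse_power_sum p k t" if "1 \<le> k" for k
      using le \<open>P (a + b * cot (pi / N))\<close> that by (simp add: t_def)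
    show "0 < b / sin (pi / N)" "1 \<le> 2 * N"
      using \<open>0 < b\<close> \<open>2 \<le> N\<close> sin_pi_divide_gt_zero[OF \<open>2 \<le> N\<close>] by auto
    show "(complex_of_real t - w) ^ (2 * N) = complex_of_real ((b / sin (pi / N)) ^ (2 * N))"
      if "w \<in> D" for w
      using that of_real_cot_minus_power_eq[OF \<open>2 \<le> N\<close>] by (simp add: t_def D_def)
    show "b / sin (pi / N) < cmod (complex_of_real t - w)" if "w \<in> set z \<union> set p" "w \<notin> D" for w
      using outside that by (simp add: t_def)
  qed
qed

lemma max_re_less_iff: "max_re r < ereal t \<longleftrightarrow> (\<forall>w\<in>set r. Re w < t)"
  by (auto simp: max_re_def)

lemma open_max_re_less: "open {t. max_re r < ereal t}"
proof -
  have "{t. max_re r < ereal t} = (\<Inter>w\<in>set r. {Re w<..})"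
    by (auto simp: max_re_less_iff)
  then show ?thesis by auto
qed

lemma eventually_max_re_less_at_top: "eventually (\<lambda>t. max_re r < ereal t) at_top"
proof -
  have "eventually (\<lambda>t. \<forall>w\<in>set r. Re w < t) at_top"
    by (intro eventually_ball_finite ballI eventually_gt_at_top) auto
  then show ?thesis by (simp add: max_re_less_iff)
qed

lemma rightmost_element_least_abs_Im:
  assumes "r \<noteq> []"
  obtains c where "c \<in> set r" "max_re r = ereal (Re c)" "\<And>w. w \<in> set r \<Longrightarrow> Re w \<le> Re c"
    "\<And>w. w \<in> set r \<Longrightarrow> Re w = Re c \<Longrightarrow> \<bar>Im c\<bar> \<le> \<bar>Im w\<bar>"
proof -
  define a where "a = Max (Re ` set r)"
  have "a \<in> Re ` set r" "\<forall>w\<in>set r. Re w \<le> a"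
    using assms by (auto simp: a_def)
  have "max_re r = ereal a"
    using assms mono_Max_commute[of ereal "Re ` set r"]
    by (simp add: max_re_def a_def image_comp mono_def)
  obtain c where "is_arg_min (\<lambda>w. \<bar>Im w\<bar>) (\<lambda>w. w \<in> {w\<in>set r. Re w = a}) c"
    using ex_is_arg_min_if_finite[of "{w\<in>set r. Re w = a}"] \<open>a \<in> Re ` set r\<close> by force
  then show ?thesis
    using that \<open>max_re r = ereal a\<close> \<open>\<forall>w\<in>set r. Re w \<le> a\<close> by (auto simp: is_arg_min_linorder)
qed

lemma max_re_le_if_inverse_power_sum_le:
  assumes le: "\<And>t k. max_re p < ereal t \<Longrightarrow> 1 \<le> k \<Longrightarrow> inverse_power_sum z k t \<le> inverse_power_sum p k t"
    and no_real_zero: "\<And>t. max_re p < ereal t \<Longrightarrow> complex_of_real t \<notin> set z"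
  shows "max_re z \<le> max_re p"
proof (rule ccontr)
  assume "\<not> max_re z \<le> max_re p"
  then have "z \<noteq> []" by (auto simp: max_re_def)
  then obtain c where c: "c \<in> set z" "max_re z = ereal (Re c)"
    and rightmost: "\<And>w. w \<in> set z \<Longrightarrow> Re w \<le> Re c"
    and least_Im: "\<And>w. w \<in> set z \<Longrightarrow> Re w = Re c \<Longrightarrow> \<bar>Im c\<bar> \<le> \<bar>Im w\<bar>"
    using rightmost_element_least_abs_Im by blast
  define D where "D = {w. Re w = Re c \<and> \<bar>Im w\<bar> = \<bar>Im c\<bar>}"
  have "max_re p < ereal (Re c)"
    using \<open>\<not> max_re z \<le> max_re p\<close> c(2) by simp
  then have p_left: "\<And>w. w \<in> set p \<Longrightarrow> Re w < Re c"
    by (simp add: max_re_less_iff)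
  have "Im c \<noteq> 0"
  proof
    assume "Im c = 0"
    then have "c = complex_of_real (Re c)" by (simp add: complex_eq_iff)
    with c(1) no_real_zero[OF \<open>max_re p < ereal (Re c)\<close>] show False by simp
  qed
  have "card {i. i < length z \<and> z ! i \<in> D} \<le> card {i. i < length p \<and> p ! i \<in> D}"
    unfolding D_def using \<open>Im c \<noteq> 0\<close> rightmost least_Im p_left
    by (intro card_roots_on_conjugate_pair_le[where P = "\<lambda>t. max_re p < ereal t"] le
        eventually_max_re_less_at_top) force+
  moreover have "{i. i < length p \<and> p ! i \<in> D} = {}"
    using p_left[OF nth_mem] by (force simp: D_def)
  moreover have "card {i. i < length z \<and> z ! i \<in> D} > 0"
  proof -
    obtain i where "i < length z" "z ! i = c" using c(1) by (auto simp: in_set_conv_nth)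
    then show ?thesis by (auto simp: card_gt_0_iff D_def)
  qed
  ultimately show False
    by (metis card.empty not_le)
qed

theorem proposition3:
  fixes K :: real and z p :: "complex list"
  assumes "K \<noteq> 0"
    and "real_poly (root_poly z)" and "real_poly (root_poly p)"
    and "\<forall>a\<in>set z. \<forall>b\<in>set p. a \<noteq> b"
    and "LCM_on (\<lambda>s. Re (ratfun K z p (complex_of_real s))) {s. ereal s > max_re p}"
  shows "length p \<ge> length z \<and>
         max_re p \<ge> max_re z \<and>
         (length p = length z \<longrightarrow> Re (sum_list p) \<ge> Re (sum_list z))"
proof -
  have le: "inverse_power_sum z k t \<le> inverse_power_sum p k t" if "max_re p < ereal t" "1 \<le> k" for t k
    using LCM_on_ratfun_imp_inverse_power_sum_le[OF assms(2,3) open_max_re_less assms(5)] that by simp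
  have no_real_zero: "complex_of_real t \<notin> set z" if "max_re p < ereal t" for t
    using assms(5) that by (intro ratfun_Re_posD(2)) (auto simp: LCM_on_def)
  have "eventually (\<lambda>t. inverse_power_sum z 1 t \<le> inverse_power_sum p 1 t) at_top"
    using eventually_max_re_less_at_top[of p] by eventually_elim (simp add: le)
  then show ?thesis
    using length_le_if_inverse_power_sum_le_at_top Re_sum_list_le_if_inverse_power_sum_le_at_top
      max_re_le_if_inverse_power_sum_le[OF le no_real_zero] by auto
qed

end
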